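(* Let $d\ge 3$ and let $A$ be a $d$-dimensional $(0,1)$-matrix of order $4$ equivalent to $\mathcal{M}_4^d$, with (unique) block-permutation parameters $(\mathcal{E},\lambda,s)$, $\mathcal{E}=(\varepsilon_1,\dots,\varepsilon_d)$, where exactly $k$ of the $\varepsilon_i$ equal $2$. (1) If $0\le k<d$, then every filled subcube of $\mathcal{M}_4^d$ intersects exactly $2^{d-k-1}$ filled subcubes of $A$, and each such intersection is a $k$-dimensional submatrix of order $2$ (a set of the form $T_1\times\dots\times T_d$ with exactly $k$ of the $T_i$ of size $2$ and the others of size $1$). (2) If $k=d$ and $s=0$, then the filled subcubes of $A$ coincide with the filled subcubes of $\mathcal{M}_4^d$; if $k=d$ and $s=1$, then no filled subcube of $A$ intersects any filled subcube of $\mathcal{M}_4^d$.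
   Context: $\mathcal{M}_4^d$ has entry $1$ at $\alpha$ iff $\alpha_1+\dots+\alpha_d\equiv0\pmod 4$. Equivalence: permuting coordinate positions and/or applying a permutation of $\{0,1,2,3\}$ to a single coordinate, repeatedly. Define $p_1,p_2,p_3:\{0,1,2,3\}\to\{0,1\}$ by $p_1(0)=p_1(1)=0,\ p_1(2)=p_1(3)=1$; $p_2(0)=p_2(2)=0,\ p_2(1)=p_2(3)=1$; $p_3(0)=p_3(3)=0,\ p_3(1)=p_3(2)=1$; and $\mu_1(0)=\mu_1(2)=0,\ \mu_1(1)=\mu_1(3)=1$; $\mu_2(0)=\mu_2(1)=0,\ \mu_2(2)=\mu_2(3)=1$; $\mu_3(0)=\mu_3(2)=0,\ \mu_3(1)=\mu_3(3)=1$. $Q_s^d=\{y\in\{0,1\}^d:w(y)\equiv s\pmod 2\}$ ($w$ = Hamming weight). For $\mathcal{E}\in\{1,2,3\}^d$, $s\in\{0,1\}$, $\lambda:Q_s^d\to\{0,1\}$, the block permutation with parameters $(\mathcal{E},\lambda,s)$ is the $(0,1)$-matrix with entry $1$ at $\alpha$ iff $\bigoplus_i p_{\varepsilon_i}(\alpha_i)=s$ and $\bigoplus_i\mu_{\varepsilon_i}(\alpha_i)\oplus\lambda(p_{\varepsilon_1}(\alpha_1),\dots,p_{\varepsilon_d}(\alpha_d))=0$. Every matrix equivalent to $\mathcal{M}_4^d$ ($d\ge3$) is a block permutation for a unique parameter triple; in particular $\mathcal{M}_4^d$ has parameters $((2,\dots,2),\lambda_M,0)$ with $\lambda_M(x)=0$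 iff $w(x)\equiv0\pmod 4$. For a block permutation with parameters $(\mathcal{E},\lambda,s)$, its subcubes are $C_y=\{\alpha:p_{\varepsilon_i}(\alpha_i)=y_i\ \forall i\}$, $y\in\{0,1\}^d$, and $C_y$ is filled if $w(y)\equiv s\pmod 2$. *)

theory Defs
  imports Main
begin

text \<open>Multi-indices of a d-dimensional matrix of order 4: lists of length d with entries in {0,1,2,3}.
  A d-dimensional (0,1)-matrix of order 4 is represented by the set of indices where its entry is 1.\<close>

definition idx :: "nat \<Rightarrow> nat list set" where
  "idx d = {\<alpha>. length \<alpha> = d \<and> (\<forall>a\<in>set \<alpha>. a < 4)}"

definition M4 :: "nat \<Rightarrow> nat list set" where
  "M4 d = {\<alpha> \<in> idx d. sum_list \<alpha> mod 4 = 0}"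

inductive equiv_mat :: "nat \<Rightarrow> nat list set \<Rightarrow> nat list set \<Rightarrow> bool" for d where
  refl: "A \<subseteq> idx d \<Longrightarrow> equiv_mat d A A"
| coord: "equiv_mat d A B \<Longrightarrow> bij_betw \<sigma> {..<d} {..<d} \<Longrightarrow>
      equiv_mat d A {\<alpha> \<in> idx d. map (\<lambda>i. \<alpha> ! \<sigma> i) [0..<d] \<in> B}"
| val: "equiv_mat d A B \<Longrightarrow> i < d \<Longrightarrow> bij_betw \<pi> {..<4} {..<4} \<Longrightarrow>
      equiv_mat d A {\<alpha> \<in> idx d. \<alpha>[i := \<pi> (\<alpha> ! i)] \<in> B}"

text \<open>p_e and mu_e, with {0,1} encoded as {False, True}.\<close>

fun p :: "nat \<Rightarrow> nat \<Rightarrow> bool" where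
  "p e a = (if e = 1 then a = 2 \<or> a = 3
            else if e = 2 then a = 1 \<or> a = 3
            else a = 1 \<or> a = 2)"

fun mu :: "nat \<Rightarrow> nat \<Rightarrow> bool" where
  "mu e a = (if e = 1 then a = 1 \<or> a = 3
             else if e = 2 then a = 2 \<or> a = 3
             else a = 1 \<or> a = 3)"

definition weight :: "bool list \<Rightarrow> nat" where
  "weight y = length (filter id y)"

definition xorl :: "bool list \<Rightarrow> bool" where
  "xorl y = odd (weight y)"

definition pvec :: "nat list \<Rightarrow> nat list \<Rightarrow> bool list" where
  "pvec E \<alpha> = map (\<lambda>i. p (E ! i) (\<alpha> ! i)) [0..<length \<alpha>]"

definition muvec :: "nat list \<Rightarrow> nat list \<Rightarrow> bool list" where
  "muvec E \<alpha> = map (\<lambda>i. mu (E ! i) (\<alpha> ! i)) [0..<length \<alpha>]"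

text \<open>Block permutation with parameters (E, lambda, s).  lambda is only ever evaluated on Q_s^d.\<close>

definition block_perm :: "nat \<Rightarrow> nat list \<Rightarrow> (bool list \<Rightarrow> bool) \<Rightarrow> bool \<Rightarrow> nat list set" where
  "block_perm d E lam s = {\<alpha> \<in> idx d. xorl (pvec E \<alpha>) = s \<and> xorl (muvec E \<alpha>) = lam (pvec E \<alpha>)}"

definition subcube :: "nat \<Rightarrow> nat list \<Rightarrow> bool list \<Rightarrow> nat list set" where
  "subcube d E y = {\<alpha> \<in> idx d. pvec E \<alpha> = y}"

text \<open>y in {0,1}^d indexes a filled subcube of a block permutation with parameter s.\<close>

definition filled :: "nat \<Rightarrow> bool \<Rightarrow> bool list \<Rightarrow> bool" where
  "filled d s y \<longleftrightarrow> length y = d \<and> xorl y = s"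

definition submatrix2 :: "nat \<Rightarrow> nat \<Rightarrow> nat list set \<Rightarrow> bool" where
  "submatrix2 d k S \<longleftrightarrow> (\<exists>T :: nat \<Rightarrow> nat set.
      (\<forall>i<d. T i \<subseteq> {..<4} \<and> (card (T i) = 1 \<or> card (T i) = 2)) \<and>
      card {i. i < d \<and> card (T i) = 2} = k \<and>
      S = {\<alpha> \<in> idx d. \<forall>i<d. \<alpha> ! i \<in> T i})"

end

theory Submission
  imports Defs
begin

text \<open>Every parameter triple splits the cube into the subcubes $C_{y'}$, and $C_{y'}$ meets the
  subcube $C_y$ of $\mathcal{M}_4^d$ coordinatewise: in coordinate $i$ the admissible values are
  the $a$ with $p_2(a) = y_i$ and $p_{\varepsilon_i}(a) = y'_i$. There are two such $a$ if
  $\varepsilon_i = 2$ and $y_i = y'_i$, none if $\varepsilon_i = 2$ and $y_i \neq y'_i$, and exactly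
  one if $\varepsilon_i \neq 2$. So $C_y \cap C_{y'}$ is a box of dimension $k$ whenever it is
  nonempty, and it is nonempty iff $y'$ agrees with $y$ on the $k$ positions with
  $\varepsilon_i = 2$. Among these $2^{d-k}$ vectors $y'$, flipping a free coordinate shows that
  exactly half have the parity $s$ of a filled subcube. If $k = d$ the two families of subcubes
  are the same family, indexed with parities $0$ and $s$.
  Only the parameters $(\mathcal{E}, s)$ enter; the equivalence to $\mathcal{M}_4^d$ and
  $d \geq 3$ are what guarantee such parameters exist, so they are not used below.\<close>

declare p.simps [simp del]

lemma mem_subcube_iff:
  "\<alpha> \<in> subcube d E y \<longleftrightarrow> \<alpha> \<in> idx d \<and> length y = d \<and> (\<forall>i<d. p (E!i) (\<alpha>!i) = y!i)"
proof (cases "length \<alpha> = d")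
  case True
  then show ?thesis
    unfolding subcube_def pvec_def mem_Collect_eq list_eq_iff_nth_eq by auto
qed (simp add: subcube_def idx_def)

lemma subcube_disjoint: "y \<noteq> y' \<Longrightarrow> subcube d E y \<inter> subcube d E y' = {}"
  by (auto simp: subcube_def)

definition fibre :: "nat \<Rightarrow> bool \<Rightarrow> bool \<Rightarrow> nat set" where
  "fibre e b b' = {a. a < 4 \<and> p 2 a = b \<and> p e a = b'}"

lemma card_fibre:
  assumes "e \<in> {1, 2, 3}"
  shows "card (fibre e b b') = (if e = 2 then if b = b' then 2 else 0 else 1)"
proof -
  have "{a::nat. a < 4 \<and> P a} = set (filter P [0, 1, 2, 3])" for P
    unfolding set_filter by (auto simp: less_Suc_eq numeral_eq_Suc)
  then have "fibre e b b' = set (filter (\<lambda>a. p 2 a = b \<and> p e a = b') [0, 1, 2, 3])"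
    unfolding fibre_def .
  moreover have "e = 1 \<or> e = 2 \<or> e = 3"
    using assms by auto
  ultimately show ?thesis
    by (elim disjE; cases b; cases b'; simp add: p.simps)
qed

lemma fibre_subset: "fibre e b b' \<subseteq> {..<4}"
  by (auto simp: fibre_def)

lemma fibre_nonempty_iff:
  assumes "e \<in> {1, 2, 3}"
  shows "fibre e b b' \<noteq> {} \<longleftrightarrow> (e = 2 \<longrightarrow> b = b')"
proof -
  have "finite (fibre e b b')"
    using finite_subset[OF fibre_subset] by blast
  then have "fibre e b b' \<noteq> {} \<longleftrightarrow> card (fibre e b b') \<noteq> 0"
    by simp
  then show ?thesis
    using card_fibre[OF assms] by simp
qed

lemma subcube_inter_eq_box:
  assumes "length y = d" "length y' = d"
  shows "subcube d (replicate d 2) y \<inter> subcube d E y'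
    = {\<alpha> \<in> idx d. \<forall>i<d. \<alpha>!i \<in> fibre (E!i) (y!i) (y'!i)}"
  using assms by (auto simp: mem_subcube_iff idx_def fibre_def)

lemma box_nonempty_iff:
  assumes "\<And>i. i < d \<Longrightarrow> T i \<subseteq> {..<4}"
  shows "{\<alpha> \<in> idx d. \<forall>i<d. \<alpha>!i \<in> T i} \<noteq> {} \<longleftrightarrow> (\<forall>i<d. T i \<noteq> {})"
proof
  assume "\<forall>i<d. T i \<noteq> {}"
  then have "\<forall>i<d. (SOME a. a \<in> T i) \<in> T i"
    by (simp add: some_in_eq)
  then have "map (\<lambda>i. SOME a. a \<in> T i) [0..<d] \<in> {\<alpha> \<in> idx d. \<forall>i<d. \<alpha>!i \<in> T i}"
    using assms by (fastforce simp: idx_def in_set_conv_nth)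
  then show "{\<alpha> \<in> idx d. \<forall>i<d. \<alpha>!i \<in> T i} \<noteq> {}" by blast
qed blast

lemma subcube_inter_nonempty_iff:
  assumes "length y = d" "length y' = d" "length E = d" "set E \<subseteq> {1, 2, 3}"
  shows "subcube d (replicate d 2) y \<inter> subcube d E y' \<noteq> {}
    \<longleftrightarrow> (\<forall>i<d. E!i = 2 \<longrightarrow> y'!i = y!i)"
proof -
  have E: "E!i \<in> {1, 2, 3}" if "i < d" for i
    using assms(3,4) that nth_mem by blast
  have "subcube d (replicate d 2) y \<inter> subcube d E y' \<noteq> {}
    \<longleftrightarrow> (\<forall>i<d. fibre (E!i) (y!i) (y'!i) \<noteq> {})"
    unfolding subcube_inter_eq_box[OF assms(1,2)] by (rule box_nonempty_iff[OF fibre_subset])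
  also have "\<dots> \<longleftrightarrow> (\<forall>i<d. E!i = 2 \<longrightarrow> y'!i = y!i)"
    using fibre_nonempty_iff[OF E] by auto
  finally show ?thesis .
qed

lemma xorl_flip_nth:
  assumes "j < length y"
  shows "xorl (y[j := \<not> y!j]) = (\<not> xorl y)"
proof -
  have y: "y = take j y @ y!j # drop (Suc j) y"
    using assms by (simp add: id_take_nth_drop)
  have y_flip: "y[j := \<not> y!j] = take j y @ (\<not> y!j) # drop (Suc j) y"
    using assms by (simp add: upd_conv_take_nth_drop)
  show ?thesis
    unfolding xorl_def weight_def y_flip by (subst (2) y, cases "y!j") auto
qed

lemma card_parity_half:
  assumes "finite S" and flip_closed: "\<And>y. y \<in> S \<Longrightarrow> j < length y \<and> y[j := \<not> y!j] \<in> S"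
  shows "2 * card {y \<in> S. xorl y = t} = card S"
proof -
  define flip where "flip y = y[j := \<not> y!j]" for y :: "bool list"
  have flip_parity: "flip y \<in> {y \<in> S. xorl y = (\<not> u)}" if "y \<in> {y \<in> S. xorl y = u}" for y u
    using that flip_closed xorl_flip_nth unfolding flip_def by simp
  have flip_flip: "flip (flip y) = y" if "y \<in> S" for y
    using that flip_closed by (simp add: flip_def)
  have "bij_betw flip {y \<in> S. xorl y = t} {y \<in> S. xorl y = (\<not> t)}"
  proof (rule bij_betw_byWitness[where f' = flip])
    show "flip ` {y \<in> S. xorl y = t} \<subseteq> {y \<in> S. xorl y = (\<not> t)}"
      using flip_parity by blast
    show "flip ` {y \<in> S. xorl y = (\<not> t)} \<subseteq> {y \<in> S. xorl y = t}"
      using flip_parity[of _ "\<not> t"] by auto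
  qed (use flip_flip in auto)
  then have "card {y \<in> S. xorl y = t} = card {y \<in> S. xorl y = (\<not> t)}"
    by (rule bij_betw_same_card)
  moreover have "card S = card ({y \<in> S. xorl y = t} \<union> {y \<in> S. xorl y = (\<not> t)})"
    by (rule arg_cong[where f = card]) auto
  ultimately show ?thesis
    using \<open>finite S\<close> by (simp add: card_Un_disjoint disjoint_iff)
qed

lemma card_lists_fixed_on:
  fixes z :: "bool list"
  shows "card {y. length y = d \<and> (\<forall>i<d. F i \<longrightarrow> y!i = z!i)} = 2 ^ card {i. i < d \<and> \<not> F i}"
proof -
  define J where "J = {i. i < d \<and> \<not> F i}"
  define extend where "extend B = map (\<lambda>i. if F i then z!i else i \<in> B) [0..<d]" for B
  have "bij_betw extend (Pow J) {y. length y = d \<and> (\<forall>i<d. F i \<longrightarrow> y!i = z!i)}"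
  proof (rule bij_betw_byWitness[where f' = "\<lambda>y. {i \<in> J. y!i}"])
    show "\<forall>B\<in>Pow J. {i \<in> J. extend B ! i} = B"
      by (auto simp: extend_def J_def)
    show "\<forall>y\<in>{y. length y = d \<and> (\<forall>i<d. F i \<longrightarrow> y!i = z!i)}. extend {i \<in> J. y!i} = y"
      by (auto simp: extend_def J_def intro!: nth_equalityI)
  qed (auto simp: extend_def)
  then have "card {y. length y = d \<and> (\<forall>i<d. F i \<longrightarrow> y!i = z!i)} = card (Pow J)"
    by (simp add: bij_betw_same_card)
  also have "\<dots> = 2 ^ card J"
    by (simp add: card_Pow J_def)
  finally show ?thesis
    unfolding J_def .
qed

lemma card_lists_fixed_on_parity:
  assumes "j < d" "\<not> F j"
  shows "card {y. length y = d \<and> xorl y = t \<and> (\<forall>i<d. F i \<longrightarrow> y!i = z!i)}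
    = 2 ^ (card {i. i < d \<and> \<not> F i} - 1)"
proof -
  define S where "S = {y. length y = d \<and> (\<forall>i<d. F i \<longrightarrow> y!i = z!i)}"
  define n where "n = card {i. i < d \<and> \<not> F i}"
  have card_S: "card S = 2 ^ n"
    unfolding S_def n_def by (rule card_lists_fixed_on)
  have "2 * card {y \<in> S. xorl y = t} = card S"
  proof (rule card_parity_half)
    show "finite S"
      using card_S by (simp add: card_ge_0_finite)
    show "j < length y \<and> y[j := \<not> y!j] \<in> S" if "y \<in> S" for y
      using that assms by (auto simp: S_def nth_list_update)
  qed
  moreover have "n \<noteq> 0"
    using assms by (auto simp: n_def card_eq_0_iff)
  ultimately have "card {y \<in> S. xorl y = t} = 2 ^ (n - 1)"
    using card_S by (cases n) auto
  moreover have "{y \<in> S. xorl y = t} = {y. length y = d \<and> xorl y = t \<and> (\<forall>i<d. F i \<longrightarrow> y!i = z!i)}"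
    by (auto simp: S_def)
  ultimately show ?thesis
    by (simp add: n_def)
qed

lemma card_filled_subcubes_meeting:
  assumes "length y = d" "length E = d" "set E \<subseteq> {1, 2, 3}"
    and k: "k = card {i. i < d \<and> E!i = 2}" "k < d"
  shows "card {y'. filled d s y' \<and> subcube d (replicate d 2) y \<inter> subcube d E y' \<noteq> {}}
    = 2 ^ (d - k - 1)"
proof -
  have "{i. i < d \<and> E!i \<noteq> 2} = {..<d} - {i. i < d \<and> E!i = 2}"
    by auto
  then have card_not_2: "card {i. i < d \<and> E!i \<noteq> 2} = d - k"
    using k(1) by (simp add: card_Diff_subset subset_eq)
  then have "{i. i < d \<and> E!i \<noteq> 2} \<noteq> {}"
    using k(2) by (intro notI) simp
  then obtain j where "j < d" "E!j \<noteq> 2"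
    by blast
  have "{y'. filled d s y' \<and> subcube d (replicate d 2) y \<inter> subcube d E y' \<noteq> {}}
    = {y'. length y' = d \<and> xorl y' = s \<and> (\<forall>i<d. E!i = 2 \<longrightarrow> y'!i = y!i)}"
    using subcube_inter_nonempty_iff[OF assms(1) _ assms(2,3)] by (auto simp: filled_def)
  then show ?thesis
    using card_lists_fixed_on_parity[of j d "\<lambda>i. E!i = 2", OF \<open>j < d\<close> \<open>E!j \<noteq> 2\<close>] card_not_2
    by simp
qed

lemma submatrix2_subcube_inter:
  assumes "length y = d" "length y' = d" "length E = d" "set E \<subseteq> {1, 2, 3}"
    and "subcube d (replicate d 2) y \<inter> subcube d E y' \<noteq> {}"
  shows "submatrix2 d (card {i. i < d \<and> E!i = 2}) (subcube d (replicate d 2) y \<inter> subcube d E y')"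
  unfolding submatrix2_def
proof (intro exI conjI allI impI)
  define T where "T i = fibre (E!i) (y!i) (y'!i)" for i
  have card_T: "card (T i) = (if E!i = 2 then 2 else 1)" if "i < d" for i
  proof -
    have "E!i \<in> {1, 2, 3}"
      using that assms(3,4) nth_mem by blast
    moreover have "E!i = 2 \<longrightarrow> y'!i = y!i"
      using that assms subcube_inter_nonempty_iff by blast
    ultimately show ?thesis
      by (auto simp: T_def card_fibre)
  qed
  show "T i \<subseteq> {..<4}" for i
    by (simp add: T_def fibre_subset)
  show "card (T i) = 1 \<or> card (T i) = 2" if "i < d" for i
    using card_T[OF that] by simp
  show "card {i. i < d \<and> card (T i) = 2} = card {i. i < d \<and> E!i = 2}"
    using card_T by (intro arg_cong[where f = card]) (auto split: if_splits)
  show "subcube d (replicate d 2) y \<inter> subcube d E y' = {\<alpha> \<in> idx d. \<forall>i<d. \<alpha>!i \<in> T i}"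
    unfolding T_def by (rule subcube_inter_eq_box[OF assms(1,2)])
qed

lemma eq_replicate_if_card_nth_eq:
  assumes "card {i. i < length xs \<and> xs!i = c} = length xs"
  shows "xs = replicate (length xs) c"
proof -
  have "{i. i < length xs \<and> xs!i = c} = {..<length xs}"
    by (rule card_subset_eq) (use assms in auto)
  then show ?thesis
    by (auto simp: list_eq_iff_nth_eq)
qed

theorem mainTheorem11:
  fixes d k :: nat and E :: "nat list" and lam :: "bool list \<Rightarrow> bool" and s :: bool
    and A :: "nat list set"
  assumes "d \<ge> 3"
    and "equiv_mat d (M4 d) A"
    and "length E = d" and "set E \<subseteq> {1, 2, 3}"
    and "A = block_perm d E lam s"
    and "k = card {i. i < d \<and> E ! i = 2}"
  shows "(k < d \<longrightarrow>
           (\<forall>y. filled d False y \<longrightarrow>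
              card {y'. filled d s y' \<and> subcube d (replicate d 2) y \<inter> subcube d E y' \<noteq> {}}
                = 2 ^ (d - k - 1) \<and>
              (\<forall>y'. filled d s y' \<and> subcube d (replicate d 2) y \<inter> subcube d E y' \<noteq> {} \<longrightarrow>
                 submatrix2 d k (subcube d (replicate d 2) y \<inter> subcube d E y'))))
       \<and> (k = d \<and> \<not> s \<longrightarrow>
           {subcube d E y' | y'. filled d s y'} = {subcube d (replicate d 2) y | y. filled d False y})
       \<and> (k = d \<and> s \<longrightarrow>
           (\<forall>y y'. filled d False y \<and> filled d s y' \<longrightarrow>
              subcube d (replicate d 2) y \<inter> subcube d E y' = {}))"
proof (intro conjI impI allI)
  fix y assume "k < d" and y: "filled d False y"
  then have len_y: "length y = d"
    by (simp add: filled_def)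
  show "card {y'. filled d s y' \<and> subcube d (replicate d 2) y \<inter> subcube d E y' \<noteq> {}}
      = 2 ^ (d - k - 1)"
    by (rule card_filled_subcubes_meeting[OF len_y assms(3,4,6) \<open>k < d\<close>])
  show "submatrix2 d k (subcube d (replicate d 2) y \<inter> subcube d E y')"
    if "filled d s y' \<and> subcube d (replicate d 2) y \<inter> subcube d E y' \<noteq> {}" for y'
    unfolding assms(6)
    by (rule submatrix2_subcube_inter[OF len_y _ assms(3,4)]) (use that in \<open>simp_all add: filled_def\<close>)
next
  assume "k = d \<and> \<not> s"
  then show "{subcube d E y' | y'. filled d s y'} = {subcube d (replicate d 2) y | y. filled d False y}"
    using eq_replicate_if_card_nth_eq[of E 2] assms(3,6) by simp
next
  fix y y' assume "k = d \<and> s" "filled d False y \<and> filled d s y'"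
  then show "subcube d (replicate d 2) y \<inter> subcube d E y' = {}"
    using eq_replicate_if_card_nth_eq[of E 2] assms(3,6) subcube_disjoint[of y y']
    by (auto simp: filled_def)
qed

end
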